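(* Let $M\in\overline{ARI}$ be polynomial-valued. Then $swap\big(\overline{ganit}(poc)\cdot M\big)\in ARI^\Delta$.
   Context: $ARI$ (resp. $\overline{ARI}$) is the space of moulds $A=(A^r)_{r\ge0}$ with $A^r\in\mathbb{Q}(u_1,\dots,u_r)$ (resp. $\mathbb{Q}(v_1,\dots,v_r)$) and $A^0=0$. $swap:\overline{ARI}\to ARI$ is $swap(C)(u_1,\dots,u_r)=C(u_1+\dots+u_r,u_1+\dots+u_{r-1},\dots,u_1)$. $ARI^\Delta$ is the set of $A\in ARI$ such that $u_1\cdots u_r(u_1+\dots+u_r)A(u_1,\dots,u_r)$ is a polynomial for every $r\ge1$. $poc(v_1,\dots,v_r)=\frac{1}{v_1(v_1-v_2)\cdots(v_{r-1}-v_r)}$, $poc(\emptyset)=1$. $(\overline{ganit}(Q)\cdot T)(v_1,\dots,v_r)=\sum Q(\lfloor\mathbf b_1)\cdots Q(\lfloor\mathbf b_s)T(\mathbf a_1\cdots\mathbf a_s)$, summed over all decompositions of $(v_1,\dots,v_r)$ into consecutive chunks $\mathbf a_1\mathbf b_1\cdots\mathbf a_s\mathbf b_s$ ($s\ge1$, all nonempty except possibly $\mathbf b_s$), with $\mathbf a_1\cdots\mathbf a_s$ the concatenation, $\lfloor\mathbf b_i=(v_k-v_{k-1},v_{k+1}-v_{k-1},\dots,v_{k+l}-v_{k-1})$ for $\mathbf b_i=(v_k,\dots,v_{k+l})$, and $\lfloor\emptyset=\emptyset$. *)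

theory Defs
  imports Complex_Main
begin

text \<open>A mould component of length r is modelled as a function on rat lists
(the variables u_1..u_r resp. v_1..v_r), a mould as a function rat list \<Rightarrow> rat.\<close>

type_synonym mould = "rat list \<Rightarrow> rat"

definition poly_eval :: "nat \<Rightarrow> ((nat \<Rightarrow> nat) \<Rightarrow> rat) \<Rightarrow> rat list \<Rightarrow> rat" where
  "poly_eval r c us = (\<Sum>\<alpha> \<in> {\<alpha>. c \<alpha> \<noteq> 0}. c \<alpha> * (\<Prod>i<r. (us ! i) ^ (\<alpha> i)))"

definition is_poly_coeffs :: "((nat \<Rightarrow> nat) \<Rightarrow> rat) \<Rightarrow> bool" where
  "is_poly_coeffs c \<longleftrightarrow> finite {\<alpha>. c \<alpha> \<noteq> 0}"

definition polynomial_valued :: "mould \<Rightarrow> bool" where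
  "polynomial_valued M \<longleftrightarrow>
     (\<forall>r. \<exists>c. is_poly_coeffs c \<and> (\<forall>vs. length vs = r \<longrightarrow> M vs = poly_eval r c vs))"

definition poc :: mould where
  "poc vs = (if vs = [] then 1
     else 1 / (hd vs * (\<Prod>i < length vs - 1. (vs ! i - vs ! (i+1)))))"

definition decomps :: "'a list \<Rightarrow> ('a list \<times> 'a list) list set" where
  "decomps vs = {ps. ps \<noteq> [] \<and> concat (map (\<lambda>(a,b). a @ b) ps) = vs
      \<and> (\<forall>(a,b) \<in> set ps. a \<noteq> []) \<and> (\<forall>(a,b) \<in> set (butlast ps). b \<noteq> [])}"

text \<open>Lower floor: the chunk b following the chunk a is shifted by the last
entry of a (the variable v_{k-1} immediately preceding b).\<close>
definition lfloor :: "rat list \<Rightarrow> rat list \<Rightarrow> rat list" where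
  "lfloor a b = map (\<lambda>x. x - last a) b"

definition ganit_bar :: "mould \<Rightarrow> mould \<Rightarrow> mould" where
  "ganit_bar Q T vs = (\<Sum>ps \<in> decomps vs.
      prod_list (map (\<lambda>(a,b). Q (lfloor a b)) ps) * T (concat (map fst ps)))"

definition swap :: "mould \<Rightarrow> mould" where
  "swap C us = C (rev (map (\<lambda>k. sum_list (take k us)) [1..<length us + 1]))"

text \<open>ARI^Delta: A^0 = 0 and for each r \<ge> 1, u_1...u_r (u_1+...+u_r) A(u) is a
polynomial (as rational functions, i.e. agreeing with a polynomial off the
hyperplanes u_i = 0, u_1+...+u_r = 0).\<close>
definition ARI_Delta :: "mould \<Rightarrow> bool" where
  "ARI_Delta A \<longleftrightarrow> A [] = 0 \<and>
     (\<forall>r\<ge>1. \<exists>c. is_poly_coeffs c \<and>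
        (\<forall>us. length us = r \<and> (\<forall>x\<in>set us. x \<noteq> 0) \<and> sum_list us \<noteq> 0 \<longrightarrow>
           prod_list us * sum_list us * A us = poly_eval r c us))"

end

theory Submission
  imports Defs
begin

text \<open>
Under \<open>swap\<close> the variables become \<open>v\<^sub>k = u\<^sub>1 + ... + u\<^sub>r\<^sub>+\<^sub>1\<^sub>-\<^sub>k\<close>, so every
consecutive difference \<open>v\<^sub>k - v\<^sub>k\<^sub>+\<^sub>1\<close> is a single variable \<open>u\<^sub>r\<^sub>-\<^sub>k\<close>. In a term of
\<open>ganit(poc)\<cdot>M\<close> the factor \<open>poc(\<lfloor>b\<^sub>i)\<close> is \<open>\<plusminus>1\<close> over the product of the consecutive
differences of \<open>v\<close> running from the last entry of \<open>a\<^sub>i\<close> through \<open>b\<^sub>i\<close>. Because every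
\<open>a\<^sub>i\<close> is nonempty these index ranges are disjoint, so the product of all \<open>poc\<close>-factors
is a constant over a product of distinct variables \<open>u\<^sub>k\<close>, which \<open>u\<^sub>1\<cdots>u\<^sub>r\<close> cancels.
The remaining factor \<open>M(a\<^sub>1\<cdots>a\<^sub>s)\<close> is a polynomial in the \<open>v\<close>'s, hence in the \<open>u\<close>'s.
\<close>

section \<open>Polynomial functions\<close>

definition monomial :: "nat \<Rightarrow> (nat \<Rightarrow> nat) \<Rightarrow> rat list \<Rightarrow> rat" where
  "monomial r \<alpha> us = (\<Prod>i<r. (us ! i) ^ (\<alpha> i))"

lemma monomial_add: "monomial r (\<lambda>j. \<alpha> j + \<beta> j) us = monomial r \<alpha> us * monomial r \<beta> us"
  unfolding monomial_def by (simp add: power_add prod.distrib)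

definition poly_fun :: "nat \<Rightarrow> (rat list \<Rightarrow> rat) \<Rightarrow> bool" where
  "poly_fun r f \<longleftrightarrow> (\<exists>c. is_poly_coeffs c \<and> (\<forall>us. length us = r \<longrightarrow> f us = poly_eval r c us))"

lemma poly_eval_superset:
  assumes "finite S" "{\<alpha>. c \<alpha> \<noteq> 0} \<subseteq> S"
  shows "poly_eval r c us = (\<Sum>\<alpha>\<in>S. c \<alpha> * monomial r \<alpha> us)"
  unfolding poly_eval_def monomial_def
  by (rule sum.mono_neutral_left) (use assms in auto)

lemma poly_fun_cong:
  "poly_fun r f \<Longrightarrow> (\<And>us. length us = r \<Longrightarrow> f us = g us) \<Longrightarrow> poly_fun r g"
  unfolding poly_fun_def by metis

lemma poly_fun_scaled_monomial: "poly_fun r (\<lambda>us. k * monomial r \<alpha> us)"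
proof -
  define c where "c \<beta> = (if \<beta> = \<alpha> then k else 0)" for \<beta>
  have supp: "{\<beta>. c \<beta> \<noteq> 0} \<subseteq> {\<alpha>}"
    by (auto simp: c_def)
  then have "is_poly_coeffs c"
    unfolding is_poly_coeffs_def using finite_subset by blast
  moreover have "poly_eval r c us = k * monomial r \<alpha> us" for us
    by (simp add: poly_eval_superset[OF _ supp] c_def)
  ultimately show ?thesis
    unfolding poly_fun_def by metis
qed

lemma poly_fun_const: "poly_fun r (\<lambda>_. k)"
  using poly_fun_scaled_monomial[of r k "\<lambda>_. 0"] by (simp add: monomial_def)

lemma poly_fun_nth:
  assumes "i < r"
  shows "poly_fun r (\<lambda>us. us ! i)"
proof (rule poly_fun_cong[OF poly_fun_scaled_monomial[of r 1 "\<lambda>j. if j = i then 1 else 0"]])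
  fix us :: "rat list"
  have "monomial r (\<lambda>j. if j = i then 1 else 0) us = (\<Prod>j<r. if j = i then us ! i else 1)"
    unfolding monomial_def by (rule prod.cong) auto
  then show "1 * monomial r (\<lambda>j. if j = i then 1 else 0) us = us ! i"
    using assms by simp
qed

lemma poly_fun_add:
  assumes "poly_fun r f" "poly_fun r g"
  shows "poly_fun r (\<lambda>us. f us + g us)"
proof -
  obtain c1 where c1: "is_poly_coeffs c1" "\<And>us. length us = r \<Longrightarrow> f us = poly_eval r c1 us"
    using assms(1) unfolding poly_fun_def by blast
  obtain c2 where c2: "is_poly_coeffs c2" "\<And>us. length us = r \<Longrightarrow> g us = poly_eval r c2 us"
    using assms(2) unfolding poly_fun_def by blast
  define S where "S = {\<alpha>. c1 \<alpha> \<noteq> 0} \<union> {\<alpha>. c2 \<alpha> \<noteq> 0}"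
  define c where "c \<alpha> = c1 \<alpha> + c2 \<alpha>" for \<alpha>
  have S: "finite S" "{\<alpha>. c1 \<alpha> \<noteq> 0} \<subseteq> S" "{\<alpha>. c2 \<alpha> \<noteq> 0} \<subseteq> S" "{\<alpha>. c \<alpha> \<noteq> 0} \<subseteq> S"
    using c1(1) c2(1) unfolding S_def c_def is_poly_coeffs_def by auto
  then have "is_poly_coeffs c"
    unfolding is_poly_coeffs_def using finite_subset by blast
  moreover have "f us + g us = poly_eval r c us" if "length us = r" for us
  proof -
    have "poly_eval r c us = (\<Sum>\<alpha>\<in>S. c \<alpha> * monomial r \<alpha> us)"
      by (rule poly_eval_superset[OF S(1,4)])
    also have "\<dots> = poly_eval r c1 us + poly_eval r c2 us"
      by (simp add: poly_eval_superset[OF S(1)] S(2,3) c_def distrib_right sum.distrib)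
    finally show ?thesis
      using that by (simp add: c1(2) c2(2))
  qed
  ultimately show ?thesis
    unfolding poly_fun_def by blast
qed

lemma poly_fun_sum:
  assumes "finite A" "\<And>a. a \<in> A \<Longrightarrow> poly_fun r (g a)"
  shows "poly_fun r (\<lambda>us. \<Sum>a\<in>A. g a us)"
  using assms by (induction A rule: finite_induct) (auto intro: poly_fun_const poly_fun_add)

lemma poly_fun_sum_list: "poly_fun r sum_list"
proof -
  have "poly_fun r (\<lambda>us. \<Sum>i<r. us ! i)"
    by (intro poly_fun_sum poly_fun_nth) auto
  then show ?thesis
    by (rule poly_fun_cong) (simp add: sum_list_sum_nth atLeast0LessThan)
qed

lemma poly_fun_mult:
  assumes "poly_fun r f" "poly_fun r g"
  shows "poly_fun r (\<lambda>us. f us * g us)"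
proof -
  obtain c1 where c1: "is_poly_coeffs c1" "\<And>us. length us = r \<Longrightarrow> f us = poly_eval r c1 us"
    using assms(1) unfolding poly_fun_def by blast
  obtain c2 where c2: "is_poly_coeffs c2" "\<And>us. length us = r \<Longrightarrow> g us = poly_eval r c2 us"
    using assms(2) unfolding poly_fun_def by blast
  define S where "S = {\<alpha>. c1 \<alpha> \<noteq> 0} \<times> {\<alpha>. c2 \<alpha> \<noteq> 0}"
  have "finite S"
    using c1(1) c2(1) unfolding S_def is_poly_coeffs_def by blast
  then have "poly_fun r (\<lambda>us. \<Sum>(\<alpha>, \<beta>)\<in>S. (c1 \<alpha> * c2 \<beta>) * monomial r (\<lambda>j. \<alpha> j + \<beta> j) us)"
    by (intro poly_fun_sum) (auto simp: poly_fun_scaled_monomial)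
  moreover have "(\<Sum>(\<alpha>, \<beta>)\<in>S. (c1 \<alpha> * c2 \<beta>) * monomial r (\<lambda>j. \<alpha> j + \<beta> j) us) = f us * g us"
    if "length us = r" for us
    using that c1 c2 unfolding is_poly_coeffs_def
    by (simp add: S_def poly_eval_superset[OF _ order_refl] sum_product sum.cartesian_product
        monomial_add mult_ac split_beta)
  ultimately show ?thesis
    by (rule poly_fun_cong)
qed

lemma poly_fun_prod:
  assumes "finite A" "\<And>a. a \<in> A \<Longrightarrow> poly_fun r (g a)"
  shows "poly_fun r (\<lambda>us. \<Prod>a\<in>A. g a us)"
  using assms by (induction A rule: finite_induct) (auto intro: poly_fun_const poly_fun_mult)

lemma poly_fun_power: "poly_fun r f \<Longrightarrow> poly_fun r (\<lambda>us. f us ^ n)"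
  by (induction n) (auto intro: poly_fun_const poly_fun_mult)

lemma poly_fun_compose:
  assumes "poly_fun m f" "\<And>j. j < m \<Longrightarrow> poly_fun r (g j)"
  shows "poly_fun r (\<lambda>us. f (map (\<lambda>j. g j us) [0..<m]))"
proof -
  obtain c where c: "is_poly_coeffs c" "\<And>vs. length vs = m \<Longrightarrow> f vs = poly_eval m c vs"
    using assms(1) unfolding poly_fun_def by blast
  have "poly_fun r (\<lambda>us. \<Sum>\<alpha>\<in>{\<alpha>. c \<alpha> \<noteq> 0}. c \<alpha> * (\<Prod>i<m. (g i us) ^ (\<alpha> i)))"
    using c(1) unfolding is_poly_coeffs_def
    by (intro poly_fun_sum poly_fun_mult poly_fun_const poly_fun_prod poly_fun_power assms(2)) auto
  then show ?thesis
    by (rule poly_fun_cong) (simp add: c(2) poly_eval_def)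
qed

definition poly_fun_on_nonzero :: "nat \<Rightarrow> (rat list \<Rightarrow> rat) \<Rightarrow> bool" where
  "poly_fun_on_nonzero r f \<longleftrightarrow>
     (\<exists>g. poly_fun r g \<and> (\<forall>us. length us = r \<and> (\<forall>x\<in>set us. x \<noteq> 0) \<longrightarrow> f us = g us))"

lemma poly_fun_on_nonzero_cong:
  "poly_fun_on_nonzero r f \<Longrightarrow> (\<And>us. length us = r \<Longrightarrow> f us = g us) \<Longrightarrow> poly_fun_on_nonzero r g"
  unfolding poly_fun_on_nonzero_def by metis

lemma poly_fun_on_nonzero_sum:
  assumes "finite A" "\<And>a. a \<in> A \<Longrightarrow> poly_fun_on_nonzero r (f a)"
  shows "poly_fun_on_nonzero r (\<lambda>us. \<Sum>a\<in>A. f a us)"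
proof -
  obtain g where "\<And>a. a \<in> A \<Longrightarrow> poly_fun r (g a)"
    and "\<And>a us. a \<in> A \<Longrightarrow> length us = r \<Longrightarrow> \<forall>x\<in>set us. x \<noteq> 0 \<Longrightarrow> f a us = g a us"
    using assms(2) unfolding poly_fun_on_nonzero_def by metis
  then show ?thesis
    unfolding poly_fun_on_nonzero_def using assms(1)
    by (intro exI[of _ "\<lambda>us. \<Sum>a\<in>A. g a us"] conjI poly_fun_sum) auto
qed

section \<open>Decompositions and their shapes\<close>

text \<open>A decomposition \<open>a\<^sub>1 b\<^sub>1 \<cdots> a\<^sub>s b\<^sub>s\<close> of a list is determined by its shape, the list of
  chunk lengths \<open>(|a\<^sub>i|, |b\<^sub>i|)\<close>; this makes the index set of \<open>ganit_bar\<close> independent of the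
  entries.\<close>

fun split_shape :: "(nat \<times> nat) list \<Rightarrow> 'a list \<Rightarrow> ('a list \<times> 'a list) list" where
  "split_shape [] xs = []"
| "split_shape ((i, j) # sh) xs = (take i xs, take j (drop i xs)) # split_shape sh (drop (i + j) xs)"

definition shape :: "('a list \<times> 'a list) list \<Rightarrow> (nat \<times> nat) list" where
  "shape ps = map (\<lambda>(a, b). (length a, length b)) ps"

definition shape_size :: "(nat \<times> nat) list \<Rightarrow> nat" where
  "shape_size sh = sum_list (map (\<lambda>(i, j). i + j) sh)"

definition decomp_shapes :: "nat \<Rightarrow> (nat \<times> nat) list set" where
  "decomp_shapes n = {sh. sh \<noteq> [] \<and> shape_size sh = n \<and> (\<forall>(i, j)\<in>set sh. 0 < i)
      \<and> (\<forall>(i, j)\<in>set (butlast sh). 0 < j)}"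

lemma shape_size_simps [simp]:
  "shape_size [] = 0"
  "shape_size ((i, j) # sh) = i + j + shape_size sh"
  by (simp_all add: shape_size_def)

lemma shape_simps [simp]:
  "shape [] = []"
  "shape ((a, b) # ps) = (length a, length b) # shape ps"
  by (simp_all add: shape_def)

lemma shape_split_shape: "shape_size sh \<le> length xs \<Longrightarrow> shape (split_shape sh xs) = sh"
  by (induction sh arbitrary: xs) auto

lemma concat_split_shape:
  "shape_size sh = length xs \<Longrightarrow> concat (map (\<lambda>(a, b). a @ b) (split_shape sh xs)) = xs"
proof (induction sh arbitrary: xs)
  case (Cons p sh)
  obtain i j where p: "p = (i, j)"
    by fastforce
  have "take j (drop i xs) @ drop (i + j) xs = drop i xs"
    by (metis append_take_drop_id drop_drop add.commute)
  then show ?case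
    using Cons by (simp add: p)
qed simp

lemma split_shape_shape: "split_shape (shape ps) (concat (map (\<lambda>(a, b). a @ b) ps)) = ps"
  by (induction ps) auto

lemma shape_size_shape: "shape_size (shape ps) = length (concat (map (\<lambda>(a, b). a @ b) ps))"
  by (induction ps) auto

lemma length_le_shape_size: "\<forall>(i, j)\<in>set sh. 0 < i \<Longrightarrow> length sh \<le> shape_size sh"
  by (induction sh) auto

lemma decomp_shapes_0: "decomp_shapes 0 = {}"
  unfolding decomp_shapes_def using length_le_shape_size by fastforce

lemma finite_decomp_shapes: "finite (decomp_shapes n)"
proof (rule finite_subset)
  show "decomp_shapes n \<subseteq> {sh. set sh \<subseteq> {0..n} \<times> {0..n} \<and> length sh \<le> n}"
  proof (safe)
    fix sh assume sh: "sh \<in> decomp_shapes n"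
    then show "length sh \<le> n"
      using length_le_shape_size unfolding decomp_shapes_def by fastforce
    fix i j assume "(i, j) \<in> set sh"
    then have "i + j \<le> shape_size sh"
      by (induction sh) auto
    then show "i \<in> {0..n}" "j \<in> {0..n}"
      using sh unfolding decomp_shapes_def by auto
  qed
qed (rule finite_lists_length_le, simp)

lemma decomps_eq_split_shape: "decomps xs = (\<lambda>sh. split_shape sh xs) ` decomp_shapes (length xs)"
proof (intro equalityI subsetI)
  fix ps assume ps: "ps \<in> decomps xs"
  then have xs: "concat (map (\<lambda>(a, b). a @ b) ps) = xs"
    unfolding decomps_def by simp
  have "shape ps \<in> decomp_shapes (length xs)"
    using ps shape_size_shape[of ps] xs unfolding decomps_def decomp_shapes_def shape_def
    by (auto simp: map_butlast[symmetric])
  moreover have "ps = split_shape (shape ps) xs"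
    using split_shape_shape[of ps] xs by simp
  ultimately show "ps \<in> (\<lambda>sh. split_shape sh xs) ` decomp_shapes (length xs)"
    by blast
next
  fix ps assume "ps \<in> (\<lambda>sh. split_shape sh xs) ` decomp_shapes (length xs)"
  then obtain sh where sh: "sh \<in> decomp_shapes (length xs)" and ps: "ps = split_shape sh xs"
    by blast
  then have size: "shape_size sh = length xs"
    unfolding decomp_shapes_def by simp
  then have shape_ps: "map (\<lambda>(a, b). (length a, length b)) ps = sh"
    using ps shape_split_shape[of sh xs] unfolding shape_def by simp
  have "(length (fst x), length (snd x)) \<in> set sh" if "x \<in> set ps" for x
    using that shape_ps by force
  moreover have "(length (fst x), length (snd x)) \<in> set (butlast sh)" if "x \<in> set (butlast ps)" for x
    using that shape_ps by (force simp: map_butlast[symmetric])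
  ultimately show "ps \<in> decomps xs"
    using sh ps shape_ps concat_split_shape[OF size] unfolding decomps_def decomp_shapes_def
    by (fastforce split: prod.splits)
qed

lemma inj_on_split_shape: "inj_on (\<lambda>sh. split_shape sh xs) (decomp_shapes (length xs))"
  by (rule inj_on_inverseI[where g = shape]) (simp add: shape_split_shape decomp_shapes_def)

lemma concat_fst_split_shape_eq_select:
  "\<exists>idx. set idx \<subseteq> {..<shape_size sh} \<and>
     (\<forall>xs. length xs = shape_size sh \<longrightarrow> concat (map fst (split_shape sh xs)) = map ((!) xs) idx)"
proof (induction sh)
  case (Cons p sh)
  obtain i j where p: "p = (i, j)"
    by fastforce
  obtain idx where idx: "set idx \<subseteq> {..<shape_size sh}"
    "\<And>xs :: 'a list. length xs = shape_size sh \<Longrightarrow> concat (map fst (split_shape sh xs)) = map ((!) xs) idx"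
    using Cons.IH by blast
  define idx' where "idx' = [0..<i] @ map (\<lambda>k. i + j + k) idx"
  have "set idx' \<subseteq> {..<shape_size (p # sh)}"
    using idx(1) by (auto simp: idx'_def p)
  moreover have "concat (map fst (split_shape (p # sh) xs)) = map ((!) xs) idx'"
    if "length xs = shape_size (p # sh)" for xs :: "'a list"
  proof -
    have "take i xs = map ((!) xs) [0..<i]"
      using that by (intro nth_equalityI) (auto simp: p)
    moreover have "map ((!) (drop (i + j) xs)) idx = map (\<lambda>k. xs ! (i + j + k)) idx"
      using idx(1) that by (intro map_cong) (auto simp: p)
    moreover have "length (drop (i + j) xs) = shape_size sh"
      using that by (simp add: p)
    ultimately show ?thesis
      using idx(2)
      by (simp only: p idx'_def split_shape.simps list.map prod.sel concat.simps map_append map_map o_def)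
  qed
  ultimately show ?case
    by blast
qed simp

definition ganit_term :: "mould \<Rightarrow> mould \<Rightarrow> (rat list \<times> rat list) list \<Rightarrow> rat" where
  "ganit_term Q T ps = prod_list (map (\<lambda>(a, b). Q (lfloor a b)) ps) * T (concat (map fst ps))"

lemma ganit_bar_eq_sum_shapes:
  "ganit_bar Q T xs = (\<Sum>sh\<in>decomp_shapes (length xs). ganit_term Q T (split_shape sh xs))"
  unfolding ganit_bar_def decomps_eq_split_shape ganit_term_def
  by (subst sum.reindex[OF inj_on_split_shape]) simp

section \<open>The \<open>poc\<close>-factors\<close>

definition gap :: "rat list \<Rightarrow> nat \<Rightarrow> rat" where
  "gap xs k = xs ! k - xs ! Suc k"

lemma poc_lfloor:
  assumes "a \<noteq> []"
  shows "poc (lfloor a b) = (if b = [] then 1 else -1) / (\<Prod>k<length b. gap (last a # b) k)"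
proof (cases b)
  case (Cons b0 bs)
  have "lfloor a b ! k = b ! k - last a" if "k < length b" for k
    using that by (simp add: lfloor_def)
  then have "(\<Prod>k<length bs. lfloor a b ! k - lfloor a b ! Suc k) = (\<Prod>k<length bs. b ! k - b ! Suc k)"
    by (intro prod.cong) (auto simp: Cons simp del: nth_Cons_Suc)
  then have "poc (lfloor a b) = 1 / ((b0 - last a) * (\<Prod>k<length bs. b ! k - b ! Suc k))"
    by (simp add: poc_def Cons lfloor_def)
  also have "\<dots> = -1 / ((last a - b0) * (\<Prod>k<length bs. b ! k - b ! Suc k))"
    by (metis minus_diff_eq minus_divide_divide mult_minus_left)
  also have "(last a - b0) * (\<Prod>k<length bs. b ! k - b ! Suc k) = (\<Prod>k<length b. gap (last a # b) k)"
    by (simp add: Cons gap_def prod.lessThan_Suc_shift del: prod.lessThan_Suc)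
  finally show ?thesis
    using Cons by simp
qed (simp add: poc_def lfloor_def)

lemma poc_lfloor_first_chunk:
  assumes "0 < i" "i + j \<le> length xs"
  shows "poc (lfloor (take i xs) (take j (drop i xs)))
    = (if j = 0 then 1 else -1) / (\<Prod>k<j. gap xs (i - 1 + k))"
proof -
  have "last (take i xs) = xs ! (i - 1)"
    using assms by (subst last_conv_nth) auto
  then have nth_chunk: "(last (take i xs) # take j (drop i xs)) ! k = xs ! (i - 1 + k)" if "k \<le> j" for k
    using assms that by (cases k) auto
  have "(\<Prod>k<j. gap (last (take i xs) # take j (drop i xs)) k) = (\<Prod>k<j. gap xs (i - 1 + k))"
  proof (rule prod.cong)
    fix k assume "k \<in> {..<j}"
    then show "gap (last (take i xs) # take j (drop i xs)) k = gap xs (i - 1 + k)"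
      using nth_chunk[of k] nth_chunk[of "Suc k"] \<open>0 < i\<close>
      unfolding gap_def by (simp del: nth_Cons_Suc)
  qed simp
  moreover have "take i xs \<noteq> []"
    using assms by auto
  ultimately show ?thesis
    using assms(2) poc_lfloor[OF \<open>take i xs \<noteq> []\<close>, of "take j (drop i xs)"] by simp
qed

text \<open>The chunk \<open>a\<^sub>i\<close> being nonempty makes the index ranges of different factors disjoint.\<close>

lemma prod_poc_lfloor_split_shape:
  assumes "\<forall>(i, j)\<in>set sh. 0 < i"
  shows "\<exists>s K. K \<subseteq> {..<shape_size sh - 1} \<and> (\<forall>xs. length xs = shape_size sh \<longrightarrow>
     prod_list (map (\<lambda>(a, b). poc (lfloor a b)) (split_shape sh xs)) = s / (\<Prod>k\<in>K. gap xs k))"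
  using assms
proof (induction sh)
  case Nil
  show ?case
    by (intro exI[of _ 1] exI[of _ "{}"]) simp
next
  case (Cons p sh)
  obtain i j where p: "p = (i, j)"
    by fastforce
  have "0 < i"
    using Cons.prems p by auto
  obtain s K where K: "K \<subseteq> {..<shape_size sh - 1}"
    and rest: "\<And>xs. length xs = shape_size sh \<Longrightarrow>
      prod_list (map (\<lambda>(a, b). poc (lfloor a b)) (split_shape sh xs)) = s / (\<Prod>k\<in>K. gap xs k)"
    using Cons by auto
  define K1 where "K1 = (\<lambda>k. i - 1 + k) ` {..<j}"
  define K2 where "K2 = (\<lambda>k. i + j + k) ` K"
  have "finite K"
    using K finite_subset by blast
  have "K1 \<inter> K2 = {}" "K1 \<union> K2 \<subseteq> {..<shape_size (p # sh) - 1}"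
    using K \<open>0 < i\<close> by (auto simp: K1_def K2_def p)
  moreover have "prod_list (map (\<lambda>(a, b). poc (lfloor a b)) (split_shape (p # sh) xs))
      = ((if j = 0 then 1 else -1) * s) / (\<Prod>k\<in>K1 \<union> K2. gap xs k)"
    if len: "length xs = shape_size (p # sh)" for xs
  proof -
    have "i + j \<le> length xs"
      using len by (simp add: p)
    have "(\<Prod>k<j. gap xs (i - 1 + k)) = (\<Prod>k\<in>K1. gap xs k)"
      unfolding K1_def by (subst prod.reindex) (auto simp: inj_on_def)
    then have first: "poc (lfloor (take i xs) (take j (drop i xs)))
        = (if j = 0 then 1 else -1) / (\<Prod>k\<in>K1. gap xs k)"
      using poc_lfloor_first_chunk[OF \<open>0 < i\<close> \<open>i + j \<le> length xs\<close>] by simp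
    have "(\<Prod>k\<in>K. gap (drop (i + j) xs) k) = (\<Prod>k\<in>K2. gap xs k)"
      unfolding K2_def using \<open>i + j \<le> length xs\<close>
      by (subst prod.reindex) (auto simp: inj_on_def gap_def add.assoc intro: prod.cong)
    then have "prod_list (map (\<lambda>(a, b). poc (lfloor a b)) (split_shape sh (drop (i + j) xs)))
        = s / (\<Prod>k\<in>K2. gap xs k)"
      using rest[of "drop (i + j) xs"] len by (simp add: p)
    with first \<open>K1 \<inter> K2 = {}\<close> \<open>finite K\<close> show ?thesis
      by (simp add: p K1_def K2_def prod.union_disjoint)
  qed
  ultimately show ?case
    by blast
qed

section \<open>Swapped variables\<close>

lemma prod_list_eq_prod_rev: "prod_list us = (\<Prod>k<length us. us ! (length us - Suc k))"
proof -
  have "prod_list us = (\<Prod>i<length us. us ! i)"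
    by (induction us) (simp_all add: prod.lessThan_Suc_shift del: prod.lessThan_Suc)
  then show ?thesis
    by (simp add: prod.nat_diff_reindex)
qed

definition swap_vars :: "rat list \<Rightarrow> rat list" where
  "swap_vars us = rev (map (\<lambda>k. sum_list (take k us)) [1..<length us + 1])"

lemma swap_eq_swap_vars: "swap C us = C (swap_vars us)"
  by (simp add: swap_def swap_vars_def)

lemma length_swap_vars [simp]: "length (swap_vars us) = length us"
  unfolding swap_vars_def by (simp only: length_rev length_map length_upt)

lemma nth_swap_vars: "k < length us \<Longrightarrow> swap_vars us ! k = sum_list (take (length us - k) us)"
  by (simp add: swap_vars_def rev_nth del: upt_Suc, subst nth_upt, simp_all add: Suc_diff_Suc)

lemma gap_swap_vars:
  assumes "Suc k < length us"
  shows "gap (swap_vars us) k = us ! (length us - Suc k)"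
proof -
  have "length us - k = Suc (length us - Suc k)"
    using assms by simp
  then have "take (length us - k) us = take (length us - Suc k) us @ [us ! (length us - Suc k)]"
    using assms by (simp add: take_Suc_conv_app_nth)
  then show ?thesis
    using assms by (simp add: gap_def nth_swap_vars)
qed

lemma poly_fun_nth_swap_vars:
  assumes "k < r"
  shows "poly_fun r (\<lambda>us. swap_vars us ! k)"
proof -
  have "poly_fun r (\<lambda>us. \<Sum>i<r - k. us ! i)"
    by (intro poly_fun_sum poly_fun_nth) auto
  then show ?thesis
    by (rule poly_fun_cong) (use assms in \<open>simp add: nth_swap_vars sum_list_sum_nth atLeast0LessThan\<close>)
qed

lemma poly_fun_select_swap_vars:
  assumes "polynomial_valued M" "set idx \<subseteq> {..<r}"
  shows "poly_fun r (\<lambda>us. M (map ((!) (swap_vars us)) idx))"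
proof -
  have "poly_fun (length idx) M"
    using assms(1) unfolding polynomial_valued_def poly_fun_def by blast
  then have "poly_fun r (\<lambda>us. M (map (\<lambda>j. swap_vars us ! (idx ! j)) [0..<length idx]))"
  proof (rule poly_fun_compose)
    fix j assume "j < length idx"
    then have "idx ! j < r"
      using assms(2) nth_mem by blast
    then show "poly_fun r (\<lambda>us. swap_vars us ! (idx ! j))"
      by (rule poly_fun_nth_swap_vars)
  qed
  then show ?thesis
    by (rule poly_fun_cong) (intro arg_cong[where f = M] nth_equalityI, auto)
qed

lemma poly_fun_on_nonzero_ganit_term:
  assumes "polynomial_valued M" "sh \<in> decomp_shapes r"
  shows "poly_fun_on_nonzero r
           (\<lambda>us. prod_list us * sum_list us * ganit_term poc M (split_shape sh (swap_vars us)))"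
proof -
  have size: "shape_size sh = r" and "\<forall>(i, j)\<in>set sh. 0 < i"
    using assms(2) unfolding decomp_shapes_def by auto
  then obtain s K where K: "K \<subseteq> {..<r - 1}" and poc_factors: "\<And>xs. length xs = r \<Longrightarrow>
      prod_list (map (\<lambda>(a, b). poc (lfloor a b)) (split_shape sh xs)) = s / (\<Prod>k\<in>K. gap xs k)"
    using prod_poc_lfloor_split_shape by metis
  obtain idx where idx: "set idx \<subseteq> {..<r}" and first_chunks: "\<And>xs :: rat list. length xs = r \<Longrightarrow>
      concat (map fst (split_shape sh xs)) = map ((!) xs) idx"
    using concat_fst_split_shape_eq_select[of sh] size by metis
  define P :: "nat set \<Rightarrow> rat list \<Rightarrow> rat" where "P L us = (\<Prod>k\<in>L. us ! (r - Suc k))" for L us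
  have "finite K"
    using K finite_subset by blast
  have "poly_fun r (\<lambda>us. s * P ({..<r} - K) us * sum_list us * M (map ((!) (swap_vars us)) idx))"
    unfolding P_def
    by (intro poly_fun_mult poly_fun_const poly_fun_prod poly_fun_nth poly_fun_sum_list
        poly_fun_select_swap_vars assms(1) idx) auto
  moreover have "prod_list us * sum_list us * ganit_term poc M (split_shape sh (swap_vars us))
      = s * P ({..<r} - K) us * sum_list us * M (map ((!) (swap_vars us)) idx)"
    if us: "length us = r" "\<forall>x\<in>set us. x \<noteq> 0" for us
  proof -
    have "(\<Prod>k\<in>K. gap (swap_vars us) k) = P K us"
      unfolding P_def using K us(1) by (intro prod.cong) (auto simp: gap_swap_vars)
    moreover have "P K us \<noteq> 0"
      unfolding P_def using \<open>finite K\<close> K us by (auto intro!: us(2)[rule_format])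
    moreover have "prod_list us = P ({..<r} - K) us * P K us"
    proof -
      have "K \<subseteq> {..<r}"
        using K by auto
      then show ?thesis
        unfolding P_def using prod.subset_diff[of K "{..<r}"] us(1) by (simp add: prod_list_eq_prod_rev)
    qed
    ultimately show ?thesis
      using us(1) by (simp add: ganit_term_def poc_factors first_chunks)
  qed
  ultimately show ?thesis
    unfolding poly_fun_on_nonzero_def by blast
qed

theorem lemma33:
  fixes M :: mould
  assumes "M [] = 0"
    and "polynomial_valued M"
  shows "ARI_Delta (swap (ganit_bar poc M))"
proof -
  have "swap (ganit_bar poc M) [] = 0"
    by (simp add: swap_eq_swap_vars ganit_bar_eq_sum_shapes decomp_shapes_0)
  moreover have "poly_fun_on_nonzero r (\<lambda>us. prod_list us * sum_list us * swap (ganit_bar poc M) us)"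
    for r
  proof -
    have "poly_fun_on_nonzero r (\<lambda>us. \<Sum>sh\<in>decomp_shapes r.
        prod_list us * sum_list us * ganit_term poc M (split_shape sh (swap_vars us)))"
      by (intro poly_fun_on_nonzero_sum finite_decomp_shapes poly_fun_on_nonzero_ganit_term assms(2))
    then show ?thesis
      by (rule poly_fun_on_nonzero_cong) (simp add: swap_eq_swap_vars ganit_bar_eq_sum_shapes sum_distrib_left)
  qed
  ultimately show ?thesis
    unfolding ARI_Delta_def poly_fun_on_nonzero_def poly_fun_def by metis
qed

end
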